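(* Let $g$ be an associative algebra equipped with a nondegenerate symmetric bilinear form $\langle\cdot,\cdot\rangle$ satisfying $\langle u v,w\rangle=\langle u,v w\rangle$. Let $n\ge1$ and $\mathbf{g}=g\oplus\cdots\oplus g$ ($n$ copies) with componentwise multiplication. Let $\mathbf{C},\mathbf{A}$ be linear operators on $\mathbf{g}$ written in components as $(\mathbf{C}(\mathbf{u}))_i=\sum_j C_{ij}(u_j)$, $(\mathbf{A}(\mathbf{u}))_i=\sum_j A_{ij}(u_j)$ with linear operators $C_{ij},A_{ij}$ on $g$. Then Hom$(\mathbf{C},\mathbf{A})$ holds on $\mathbf{g}$ if and only if: (1) Hom$(C_{ij},A_{jj})$ holds for all $1\le i,j\le n$; and (2) for all $1\le i,j,k\le n$ with $j<k$ and all $X,Y\in g$: $[C_{ij}(X),C_{ik}(Y)]=C_{ik}\big([A_{kj}(X),Y]\big)+C_{ij}\big([X,A_{jk}(Y)]\big)$.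
   Context: $[X,Y]=XY-YX$ (componentwise in $\mathbf{g}$). For linear operators $S,A$ on an associative algebra, Hom$(S,A)$ means $[S(X),S(Y)]=S\big([A(X),Y]+[X,A(Y)]\big)$ for all $X,Y$. *)

theory Defs
  imports Complex_Main
begin

definition com :: "'a::ring \<Rightarrow> 'a \<Rightarrow> 'a" where
  "com x y = x * y - y * x"

definition assoc_algebra :: "('k::field \<Rightarrow> 'a::ring \<Rightarrow> 'a) \<Rightarrow> bool" where
  "assoc_algebra scale \<longleftrightarrow> vector_space scale \<and>
     (\<forall>c x y. scale c (x * y) = scale c x * y \<and> scale c (x * y) = x * scale c y)"

definition nondeg_sym_invariant_form ::
  "('k::field \<Rightarrow> 'a::ring \<Rightarrow> 'a) \<Rightarrow> ('a \<Rightarrow> 'a \<Rightarrow> 'k) \<Rightarrow> bool" where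
  "nondeg_sym_invariant_form scale B \<longleftrightarrow>
     (\<forall>y. Vector_Spaces.linear scale (*) (\<lambda>x. B x y)) \<and>
     (\<forall>x. Vector_Spaces.linear scale (*) (\<lambda>y. B x y)) \<and>
     (\<forall>x y. B x y = B y x) \<and>
     (\<forall>x. (\<forall>y. B x y = 0) \<longrightarrow> x = 0) \<and>
     (\<forall>u v w. B (u * v) w = B u (v * w))"

definition Hom_on :: "'b set \<Rightarrow> ('b \<Rightarrow> 'b \<Rightarrow> 'b) \<Rightarrow> ('b \<Rightarrow> 'b \<Rightarrow> 'b) \<Rightarrow> ('b \<Rightarrow> 'b) \<Rightarrow> ('b \<Rightarrow> 'b) \<Rightarrow> bool" where
  "Hom_on V add br S A \<longleftrightarrow>
     (\<forall>X\<in>V. \<forall>Y\<in>V. br (S X) (S Y) = S (add (br (A X) Y) (br X (A Y))))"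

abbreviation Hom :: "('a::ring \<Rightarrow> 'a) \<Rightarrow> ('a \<Rightarrow> 'a) \<Rightarrow> bool" where
  "Hom S A \<equiv> Hom_on UNIV (+) com S A"

text \<open>The direct sum g^n, elements as functions nat => g supported on {..<n}.\<close>
definition gsum :: "nat \<Rightarrow> (nat \<Rightarrow> 'a::zero) set" where
  "gsum n = {u. \<forall>i\<ge>n. u i = 0}"

definition vadd :: "(nat \<Rightarrow> 'a::plus) \<Rightarrow> (nat \<Rightarrow> 'a) \<Rightarrow> nat \<Rightarrow> 'a" where
  "vadd u v = (\<lambda>i. u i + v i)"

definition vcom :: "(nat \<Rightarrow> 'a::ring) \<Rightarrow> (nat \<Rightarrow> 'a) \<Rightarrow> nat \<Rightarrow> 'a" where
  "vcom u v = (\<lambda>i. com (u i) (v i))"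

definition block_op :: "nat \<Rightarrow> (nat \<Rightarrow> nat \<Rightarrow> 'a \<Rightarrow> 'a::comm_monoid_add) \<Rightarrow> (nat \<Rightarrow> 'a) \<Rightarrow> nat \<Rightarrow> 'a" where
  "block_op n C u = (\<lambda>i. if i < n then (\<Sum>j<n. C i j (u j)) else 0)"

end

theory Submission
  imports Defs
begin

text \<open>Both sides of Hom(\<open>C\<close>, \<open>A\<close>) are biadditive in the pair of arguments, so it suffices to
  test them on pairs of vectors \<open>\<iota>\<^sub>j X\<close>, \<open>\<iota>\<^sub>k Y\<close> concentrated in single components; the
  \<open>i\<close>-th component of the resulting identity is the \<open>(i, j, k)\<close> block identity. For \<open>j = k\<close>
  it is Hom(\<open>C\<^sub>i\<^sub>j\<close>, \<open>A\<^sub>j\<^sub>j\<close>), and by antisymmetry of the commutator the \<open>(i, k, j)\<close> identity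
  is equivalent to the \<open>(i, j, k)\<close> one, so \<open>j < k\<close> suffices.\<close>

lemma additive_if_linear: "Vector_Spaces.linear s1 s2 f \<Longrightarrow> additive f"
  by (simp add: Vector_Spaces.linear_iff additive_def)

lemma com_zero [simp]: "com 0 y = 0" "com x 0 = 0"
  by (simp_all add: com_def)

lemma com_antisym: "com x y = - com y x"
  by (simp add: com_def)

lemma com_sum_left: "com (sum f S) y = (\<Sum>s\<in>S. com (f s) y)"
  by (simp add: com_def sum_distrib_left sum_distrib_right sum_subtractf)

lemma com_sum_right: "com x (sum f S) = (\<Sum>s\<in>S. com x (f s))"
  by (simp add: com_def sum_distrib_left sum_distrib_right sum_subtractf)

definition unit_vec :: "nat \<Rightarrow> 'a::zero \<Rightarrow> nat \<Rightarrow> 'a" where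
  "unit_vec j x = (\<lambda>p. if p = j then x else 0)"

lemma unit_vec_in_gsum: "j < n \<Longrightarrow> unit_vec j x \<in> gsum n"
  by (simp add: gsum_def unit_vec_def)

lemma sum_unit_vec:
  assumes "\<And>p. p < n \<Longrightarrow> f p 0 = 0" and "j < n"
  shows "(\<Sum>p<n. f p (unit_vec j x p)) = f j x"
proof -
  have "(\<Sum>p<n. f p (unit_vec j x p)) = (\<Sum>p<n. if p = j then f j x else 0)"
    using assms(1) by (intro sum.cong) (auto simp: unit_vec_def)
  then show ?thesis
    using \<open>j < n\<close> by simp
qed

lemma block_op_unit_vec:
  assumes "\<And>j. j < n \<Longrightarrow> additive (M i j)" and "i < n" "j < n"
  shows "block_op n M (unit_vec j x) i = M i j x"
  using assms by (simp add: block_op_def sum_unit_vec additive.zero)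

definition block_Hom_condition ::
  "(nat \<Rightarrow> nat \<Rightarrow> 'a::ring \<Rightarrow> 'a) \<Rightarrow> (nat \<Rightarrow> nat \<Rightarrow> 'a \<Rightarrow> 'a) \<Rightarrow> nat \<Rightarrow> nat \<Rightarrow> nat \<Rightarrow> bool" where
  "block_Hom_condition C A i j k \<longleftrightarrow> (\<forall>X Y.
     com (C i j X) (C i k Y) = C i k (com (A k j X) Y) + C i j (com X (A j k Y)))"

lemma block_Hom_condition_diag:
  assumes "additive (C i j)"
  shows "block_Hom_condition C A i j j \<longleftrightarrow> Hom (C i j) (A j j)"
  unfolding block_Hom_condition_def Hom_on_def by (simp add: additive.add [OF assms])

lemma block_Hom_condition_swap:
  assumes "additive (C i j)" "additive (C i k)"
  shows "block_Hom_condition C A i j k \<longleftrightarrow> block_Hom_condition C A i k j"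
proof -
  have swapped: "com (C i j X) (C i k Y) = C i k (com (A k j X) Y) + C i j (com X (A j k Y))
    \<longleftrightarrow> com (C i k Y) (C i j X) = C i j (com (A j k Y) X) + C i k (com Y (A k j X))" for X Y
  proof -
    have "com (C i k Y) (C i j X) = - com (C i j X) (C i k Y)"
      and "C i j (com (A j k Y) X) = - C i j (com X (A j k Y))"
      and "C i k (com Y (A k j X)) = - C i k (com (A k j X) Y)"
      using com_antisym additive.minus [OF assms(1)] additive.minus [OF assms(2)] by metis+
    then show ?thesis
      by (metis add.commute minus_add_distrib neg_equal_iff_equal)
  qed
  show ?thesis
    unfolding block_Hom_condition_def using swapped by blast
qed

lemma block_Hom_condition_if_Hom_on_block_op:
  fixes C A :: "nat \<Rightarrow> nat \<Rightarrow> 'a::ring \<Rightarrow> 'a"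
  assumes Hom: "Hom_on (gsum n) vadd vcom (block_op n C) (block_op n A)"
    and addC: "\<And>i j. i < n \<Longrightarrow> j < n \<Longrightarrow> additive (C i j)"
    and addA: "\<And>i j. i < n \<Longrightarrow> j < n \<Longrightarrow> additive (A i j)"
    and "i < n" "j < n" "k < n"
  shows "block_Hom_condition C A i j k"
  unfolding block_Hom_condition_def
proof (intro allI)
  fix X Y :: 'a
  let ?u = "unit_vec j X" and ?v = "unit_vec k Y"
  have "vcom (block_op n C ?u) (block_op n C ?v) i =
      block_op n C (vadd (vcom (block_op n A ?u) ?v) (vcom ?u (block_op n A ?v))) i"
    using Hom unit_vec_in_gsum \<open>j < n\<close> \<open>k < n\<close> unfolding Hom_on_def by metis
  also have "\<dots> = (\<Sum>p<n. C i p (com (block_op n A ?u p) (?v p)) + C i p (com (?u p) (block_op n A ?v p)))"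
    unfolding block_op_def [of n C] vadd_def vcom_def using \<open>i < n\<close> addC
    by (auto intro!: sum.cong simp: additive.add)
  also have "\<dots> = (\<Sum>p<n. C i p (com (A p j X) (?v p))) + (\<Sum>p<n. C i p (com (?u p) (A p k Y)))"
    unfolding sum.distrib using assms(4-6) by (simp add: block_op_unit_vec addA)
  also have "\<dots> = C i k (com (A k j X) Y) + C i j (com X (A j k Y))"
    using sum_unit_vec [of n "\<lambda>p y. C i p (com (A p j X) y)" k Y]
      sum_unit_vec [of n "\<lambda>p x. C i p (com x (A p k Y))" j X]
    using assms(4-6) by (simp add: addC additive.zero)
  finally show "com (C i j X) (C i k Y) = C i k (com (A k j X) Y) + C i j (com X (A j k Y))"
    unfolding vcom_def using assms(4-6) by (simp add: block_op_unit_vec addC)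
qed

lemma Hom_on_block_op_if_block_Hom_condition:
  fixes C A :: "nat \<Rightarrow> nat \<Rightarrow> 'a::ring \<Rightarrow> 'a"
  assumes cond: "\<And>i j k. i < n \<Longrightarrow> j < n \<Longrightarrow> k < n \<Longrightarrow> block_Hom_condition C A i j k"
    and addC: "\<And>i j. i < n \<Longrightarrow> j < n \<Longrightarrow> additive (C i j)"
  shows "Hom_on V vadd vcom (block_op n C) (block_op n A)"
  unfolding Hom_on_def
proof (intro ballI ext)
  fix X Y :: "nat \<Rightarrow> 'a" and i :: nat
  show "vcom (block_op n C X) (block_op n C Y) i =
      block_op n C (vadd (vcom (block_op n A X) Y) (vcom X (block_op n A Y))) i"
  proof (cases "i < n")
    case False
    then show ?thesis by (simp add: vcom_def block_op_def)
  next
    case True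
    have sumC: "C i p (sum f S) = (\<Sum>s\<in>S. C i p (f s))" if "p < n" for p f and S :: "nat set"
      using addC True that by (simp add: additive.sum)
    have "vcom (block_op n C X) (block_op n C Y) i
        = (\<Sum>j<n. \<Sum>k<n. com (C i j (X j)) (C i k (Y k)))"
      using True by (simp add: vcom_def block_op_def com_sum_left com_sum_right) (rule sum.swap)
    also have "\<dots> = (\<Sum>j<n. \<Sum>k<n. C i k (com (A k j (X j)) (Y k)))
        + (\<Sum>j<n. \<Sum>k<n. C i j (com (X j) (A j k (Y k))))"
      using True cond unfolding block_Hom_condition_def sum.distrib [symmetric]
      by (intro sum.cong refl) auto
    also have "(\<Sum>j<n. \<Sum>k<n. C i k (com (A k j (X j)) (Y k)))
        = (\<Sum>k<n. C i k (com (block_op n A X k) (Y k)))"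
      by (subst sum.swap) (auto intro!: sum.cong simp: block_op_def sumC com_sum_left)
    also have "(\<Sum>j<n. \<Sum>k<n. C i j (com (X j) (A j k (Y k))))
        = (\<Sum>j<n. C i j (com (X j) (block_op n A Y j)))"
      by (auto intro!: sum.cong simp: block_op_def sumC com_sum_right)
    also have "(\<Sum>k<n. C i k (com (block_op n A X k) (Y k))) + (\<Sum>j<n. C i j (com (X j) (block_op n A Y j)))
        = block_op n C (vadd (vcom (block_op n A X) Y) (vcom X (block_op n A Y))) i"
      using True addC
      by (simp add: block_op_def [of n C] vadd_def vcom_def additive.add sum.distrib [symmetric])
    finally show ?thesis .
  qed
qed

lemma Hom_on_block_op_iff:
  fixes C A :: "nat \<Rightarrow> nat \<Rightarrow> 'a::ring \<Rightarrow> 'a"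
  assumes "\<And>i j. i < n \<Longrightarrow> j < n \<Longrightarrow> additive (C i j)"
    and "\<And>i j. i < n \<Longrightarrow> j < n \<Longrightarrow> additive (A i j)"
  shows "Hom_on (gsum n) vadd vcom (block_op n C) (block_op n A) \<longleftrightarrow>
    (\<forall>i<n. \<forall>j<n. \<forall>k<n. block_Hom_condition C A i j k)"
proof
  assume "Hom_on (gsum n) vadd vcom (block_op n C) (block_op n A)"
  then show "\<forall>i<n. \<forall>j<n. \<forall>k<n. block_Hom_condition C A i j k"
    using block_Hom_condition_if_Hom_on_block_op assms by blast
next
  assume "\<forall>i<n. \<forall>j<n. \<forall>k<n. block_Hom_condition C A i j k"
  then show "Hom_on (gsum n) vadd vcom (block_op n C) (block_op n A)"
    using Hom_on_block_op_if_block_Hom_condition assms(1) by blast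
qed

lemma block_Hom_condition_all_iff:
  assumes addC: "\<And>i j. i < n \<Longrightarrow> j < n \<Longrightarrow> additive (C i j)"
  shows "(\<forall>i<n. \<forall>j<n. \<forall>k<n. block_Hom_condition C A i j k) \<longleftrightarrow>
    (\<forall>i<n. \<forall>j<n. Hom (C i j) (A j j)) \<and>
    (\<forall>i<n. \<forall>j<n. \<forall>k<n. j < k \<longrightarrow> block_Hom_condition C A i j k)"
    (is "?all \<longleftrightarrow> ?diag \<and> ?upper")
proof
  assume ?all
  then show "?diag \<and> ?upper"
    using block_Hom_condition_diag addC by blast
next
  assume "?diag \<and> ?upper"
  then have diag: ?diag and upper: ?upper
    by blast+
  show ?all
  proof (intro allI impI)
    fix i j k assume "i < n" "j < n" "k < n"
    then have "additive (C i j)" "additive (C i k)"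
      using addC by auto
    then show "block_Hom_condition C A i j k"
      using diag upper \<open>i < n\<close> \<open>j < n\<close> \<open>k < n\<close>
        block_Hom_condition_diag [of C i j A] block_Hom_condition_swap [of C i j k A]
      by (cases j k rule: linorder_cases) auto
  qed
qed

theorem proposition4:
  fixes scale :: "'k::field \<Rightarrow> 'a::ring \<Rightarrow> 'a"
    and B :: "'a \<Rightarrow> 'a \<Rightarrow> 'k"
    and n :: nat
    and C A :: "nat \<Rightarrow> nat \<Rightarrow> 'a \<Rightarrow> 'a"
  assumes alg: "assoc_algebra scale"
    and form: "nondeg_sym_invariant_form scale B"
    and n: "n \<ge> 1"
    and linC: "\<And>i j. i < n \<Longrightarrow> j < n \<Longrightarrow> Vector_Spaces.linear scale scale (C i j)"
    and linA: "\<And>i j. i < n \<Longrightarrow> j < n \<Longrightarrow> Vector_Spaces.linear scale scale (A i j)"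
  shows "Hom_on (gsum n) vadd vcom (block_op n C) (block_op n A) \<longleftrightarrow>
    ((\<forall>i<n. \<forall>j<n. Hom (C i j) (A j j)) \<and>
     (\<forall>i<n. \<forall>j<n. \<forall>k<n. j < k \<longrightarrow> (\<forall>X Y.
        com (C i j X) (C i k Y) = C i k (com (A k j X) Y) + C i j (com X (A j k Y)))))"
proof -
  have addC: "\<And>i j. i < n \<Longrightarrow> j < n \<Longrightarrow> additive (C i j)"
    using linC additive_if_linear by blast
  have addA: "\<And>i j. i < n \<Longrightarrow> j < n \<Longrightarrow> additive (A i j)"
    using linA additive_if_linear by blast
  show ?thesis
    using Hom_on_block_op_iff [OF addC addA] block_Hom_condition_all_iff [OF addC]
    unfolding block_Hom_condition_def by simp
qed

end
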